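(* Consider an instance with $n$ agents, $m$ divisible items and binary additive valuations (notation as in the context), and let $d$ be a real number. Then the set of items $o$ such that $x_{o,i}>0$ for some $i\in\mathsf{layer}^*_d$ is the same for every stable fractional allocation $x$. Moreover, this set consists of complete items only: for every such item $o$ and every stable $x$, $\sum_{i\in\mathsf{layer}^*_d}x_{o,i}=1$.
   Context: Agents $[n]$, items $[m]$; each agent $i$ has a set $L_i\subseteq[m]$ of liked items. A fractional allocation is a matrix $x=(x_{o,i})$ with $x_{o,i}\ge0$ and $\sum_i x_{o,i}\le1$ for each item $o$; agent $i$'s value is $\sum_{o\in L_i}x_{o,i}$. $x$ is clean if $x_{o,i}=0$ whenever $o\notin L_i$, and max-USW if it maximizes the sum of agents' values. Throughout, allocations are clean and max-USW. Profile $(h_1,\dots,h_n)$ with $h_i=\sum_o x_{o,i}$. A transfer $u\to v$: distinct agents $u=i_1,\dots,i_k=v$ ($k\ge2$), items $o_1,\dots,o_{k-1}$ with $x_{o_l,i_l}>0$ and $o_l\in L_{i_{l+1}}$, amount $0<\Delta\le\min_l x_{o_l,i_l}$, moving $\Delta$ of $o_l$ from $i_l$ to $i_{l+1}$; narrowing if $h_u-\Delta\ge h_v+\Delta$. $x$ is stable if it admits no narrowing transfer. All stable fractional allocations have the same profile; for real $d$, $\mathsf{layer}^*_d=\{i: h_i=d\}$ where $h$ is this common profile. *)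

theory Defs
  imports Complex_Main
begin

text \<open>Agents are 0..<n, items are 0..<m; x j i is the fraction of item j given to agent i.
  L i is the set of items liked by agent i.\<close>

definition is_alloc :: "nat \<Rightarrow> nat \<Rightarrow> (nat \<Rightarrow> nat \<Rightarrow> real) \<Rightarrow> bool" where
  "is_alloc n m x \<longleftrightarrow> (\<forall>j<m. \<forall>i<n. 0 \<le> x j i) \<and> (\<forall>j<m. (\<Sum>i<n. x j i) \<le> 1)"

definition value_of :: "nat \<Rightarrow> (nat \<Rightarrow> nat set) \<Rightarrow> (nat \<Rightarrow> nat \<Rightarrow> real) \<Rightarrow> nat \<Rightarrow> real" where
  "value_of m L x i = (\<Sum>j\<in>L i \<inter> {..<m}. x j i)"

definition usw :: "nat \<Rightarrow> nat \<Rightarrow> (nat \<Rightarrow> nat set) \<Rightarrow> (nat \<Rightarrow> nat \<Rightarrow> real) \<Rightarrow> real" where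
  "usw n m L x = (\<Sum>i<n. value_of m L x i)"

definition is_clean :: "nat \<Rightarrow> nat \<Rightarrow> (nat \<Rightarrow> nat set) \<Rightarrow> (nat \<Rightarrow> nat \<Rightarrow> real) \<Rightarrow> bool" where
  "is_clean n m L x \<longleftrightarrow> (\<forall>j<m. \<forall>i<n. j \<notin> L i \<longrightarrow> x j i = 0)"

definition max_usw :: "nat \<Rightarrow> nat \<Rightarrow> (nat \<Rightarrow> nat set) \<Rightarrow> (nat \<Rightarrow> nat \<Rightarrow> real) \<Rightarrow> bool" where
  "max_usw n m L x \<longleftrightarrow> is_alloc n m x \<and>
     (\<forall>y. is_alloc n m y \<longrightarrow> usw n m L y \<le> usw n m L x)"

definition profile :: "nat \<Rightarrow> (nat \<Rightarrow> nat \<Rightarrow> real) \<Rightarrow> nat \<Rightarrow> real" where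
  "profile m x i = (\<Sum>j<m. x j i)"

definition is_transfer :: "nat \<Rightarrow> nat \<Rightarrow> (nat \<Rightarrow> nat set) \<Rightarrow> (nat \<Rightarrow> nat \<Rightarrow> real)
    \<Rightarrow> nat list \<Rightarrow> nat list \<Rightarrow> real \<Rightarrow> bool" where
  "is_transfer n m L x as os \<Delta> \<longleftrightarrow>
     length as \<ge> 2 \<and> distinct as \<and> set as \<subseteq> {..<n} \<and>
     length os = length as - 1 \<and> set os \<subseteq> {..<m} \<and>
     (\<forall>l < length os. x (os ! l) (as ! l) > 0 \<and> os ! l \<in> L (as ! Suc l)) \<and>
     0 < \<Delta> \<and> (\<forall>l < length os. \<Delta> \<le> x (os ! l) (as ! l))"

definition is_narrowing :: "nat \<Rightarrow> nat \<Rightarrow> (nat \<Rightarrow> nat set) \<Rightarrow> (nat \<Rightarrow> nat \<Rightarrow> real)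
    \<Rightarrow> nat list \<Rightarrow> nat list \<Rightarrow> real \<Rightarrow> bool" where
  "is_narrowing n m L x as os \<Delta> \<longleftrightarrow>
     is_transfer n m L x as os \<Delta> \<and>
     profile m x (hd as) - \<Delta> \<ge> profile m x (last as) + \<Delta>"

definition stable :: "nat \<Rightarrow> nat \<Rightarrow> (nat \<Rightarrow> nat set) \<Rightarrow> (nat \<Rightarrow> nat \<Rightarrow> real) \<Rightarrow> bool" where
  "stable n m L x \<longleftrightarrow> is_alloc n m x \<and> is_clean n m L x \<and> max_usw n m L x \<and>
     \<not> (\<exists>as os \<Delta>. is_narrowing n m L x as os \<Delta>)"

text \<open>layer*_d: agents whose (common, stable) profile value equals d.  Since all stable
  allocations share the same profile, this is {i. h_i = d} for the common profile h.\<close>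

definition layer_star :: "nat \<Rightarrow> nat \<Rightarrow> (nat \<Rightarrow> nat set) \<Rightarrow> real \<Rightarrow> nat set" where
  "layer_star n m L d = {i. i < n \<and> (\<forall>x. stable n m L x \<longrightarrow> profile m x i = d)}"

end

theory Submission
  imports Defs
begin

text \<open>
  If an agent holds part of an item that another agent
  with a smaller profile likes, shifting a little of the item between the two is a
  narrowing transfer; and a max-USW allocation allocates every liked item completely.
  Hence all holders of an item share one profile, so an item touched by a layer lies
  entirely in it. For stable x and y, every item liked by some agent of a sublevel set
  {k. h k \<le> c} of the profile h of x is owned there completely under x, so the total
  profile of y on this set cannot exceed that of x. Applied at the least value where the
  profiles of x and y disagree, this shows that all stable allocations have the same
  profile, after which the layer of an item can be computed in either allocation.
\<close>

lemma is_alloc_nonneg: "is_alloc n m x \<Longrightarrow> i < n \<Longrightarrow> j < m \<Longrightarrow> 0 \<le> x j i"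
  unfolding is_alloc_def by blast

lemma is_clean_pos_liked: "is_clean n m L x \<Longrightarrow> i < n \<Longrightarrow> j < m \<Longrightarrow> 0 < x j i \<Longrightarrow> j \<in> L i"
  unfolding is_clean_def by force

lemma stableD:
  assumes "stable n m L x"
  shows "is_alloc n m x" "is_clean n m L x" "max_usw n m L x"
    "\<not> (\<exists>as os \<Delta>. is_narrowing n m L x as os \<Delta>)"
  using assms unfolding stable_def by blast+

lemma no_narrowing_holder_profile_le:
  assumes no_narrowing: "\<not> (\<exists>as os \<Delta>. is_narrowing n m L x as os \<Delta>)"
    and "i < n" "k < n" "j < m" and holds: "0 < x j i" and likes: "j \<in> L k"
  shows "profile m x i \<le> profile m x k"
proof (rule ccontr)
  assume "\<not> ?thesis"
  then have gap: "profile m x k < profile m x i" by simp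
  then have "i \<noteq> k" by auto
  define \<Delta> where "\<Delta> = min (x j i) ((profile m x i - profile m x k) / 2)"
  have amount: "0 < \<Delta>" "\<Delta> \<le> x j i" using holds gap unfolding \<Delta>_def by auto
  have "\<Delta> \<le> (profile m x i - profile m x k) / 2"
    unfolding \<Delta>_def by (rule min.cobounded2)
  then have "profile m x k + \<Delta> \<le> profile m x i - \<Delta>" by simp
  with amount \<open>i \<noteq> k\<close> assms(2-4) holds likes have "is_narrowing n m L x [i, k] [j] \<Delta>"
    unfolding is_narrowing_def is_transfer_def by (auto simp: less_Suc_eq)
  with no_narrowing show False by blast
qed

lemma max_usw_liked_item_allocated:
  assumes opt: "max_usw n m L x" and i: "i < n" and j: "j < m" and likes: "j \<in> L i"
  shows "(\<Sum>k<n. x j k) = 1"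
proof (rule ccontr)
  assume "(\<Sum>k<n. x j k) \<noteq> 1"
  moreover have alloc: "is_alloc n m x" using opt unfolding max_usw_def by blast
  ultimately have "(\<Sum>k<n. x j k) < 1" using j unfolding is_alloc_def by force
  define \<delta> where "\<delta> = 1 - (\<Sum>k<n. x j k)"
  have "0 < \<delta>" using \<open>(\<Sum>k<n. x j k) < 1\<close> unfolding \<delta>_def by simp
  define y where "y j' k = x j' k + (if j' = j \<and> k = i then \<delta> else 0)" for j' k
  have "(\<Sum>k<n. y j' k) = (\<Sum>k<n. x j' k) + (if j' = j then \<delta> else 0)" for j'
    using i unfolding y_def by (simp add: sum.distrib)
  then have "(\<Sum>k<n. y j' k) \<le> 1" if "j' < m" for j'
    using alloc that unfolding is_alloc_def \<delta>_def by auto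
  with alloc \<open>0 < \<delta>\<close> have "is_alloc n m y"
    unfolding is_alloc_def by (auto simp: y_def)
  have "value_of m L y k = value_of m L x k + (if k = i then \<delta> else 0)" for k
    using j likes unfolding value_of_def y_def by (auto simp: sum.distrib)
  then have "usw n m L y = usw n m L x + \<delta>"
    using i unfolding usw_def by (simp add: sum.distrib)
  with opt \<open>is_alloc n m y\<close> \<open>0 < \<delta>\<close> show False unfolding max_usw_def by fastforce
qed

lemma stable_holder_profile_le:
  "stable n m L x \<Longrightarrow> i < n \<Longrightarrow> k < n \<Longrightarrow> j < m \<Longrightarrow> 0 < x j i \<Longrightarrow> j \<in> L k
    \<Longrightarrow> profile m x i \<le> profile m x k"
  by (rule no_narrowing_holder_profile_le[OF stableD(4)])

lemma stable_holders_same_profile: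
  assumes "stable n m L x" "i < n" "k < n" "j < m" "0 < x j i" "0 < x j k"
  shows "profile m x i = profile m x k"
  using assms stable_holder_profile_le[of n m L x] is_clean_pos_liked[OF stableD(2)]
  by (meson order_antisym)

lemma stable_sublevel_item_share_le:
  fixes c :: real
  assumes sx: "stable n m L x" and sy: "stable n m L y" and j: "j < m"
  defines "S \<equiv> {k. k < n \<and> profile m x k \<le> c}"
  shows "(\<Sum>k\<in>S. y j k) \<le> (\<Sum>k\<in>S. x j k)"
proof (cases "\<exists>k\<in>S. j \<in> L k")
  case True
  then obtain k where k: "k \<in> S" "j \<in> L k" by blast
  have "x j k' = 0" if "k' < n" "k' \<notin> S" for k'
  proof (rule ccontr)
    assume "x j k' \<noteq> 0"
    with is_alloc_nonneg[OF stableD(1)[OF sx] that(1) j] have "0 < x j k'" by simp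
    from stable_holder_profile_le[OF sx that(1) _ j this k(2)] k that show False
      unfolding S_def by auto
  qed
  then have "(\<Sum>k\<in>S. x j k) = (\<Sum>k<n. x j k)"
    by (intro sum.mono_neutral_left) (auto simp: S_def)
  also have "\<dots> = (\<Sum>k<n. y j k)"
    using max_usw_liked_item_allocated[OF stableD(3)[OF sx] _ j k(2)]
      max_usw_liked_item_allocated[OF stableD(3)[OF sy] _ j k(2)] k(1)
    unfolding S_def by simp
  also have "\<dots> \<ge> (\<Sum>k\<in>S. y j k)"
    using is_alloc_nonneg[OF stableD(1)[OF sy] _ j] by (intro sum_mono2) (auto simp: S_def)
  finally show ?thesis .
next
  case False
  then have "y j k = 0" if "k \<in> S" for k
    using that is_alloc_nonneg[OF stableD(1)[OF sy] _ j] is_clean_pos_liked[OF stableD(2)[OF sy] _ j]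
    unfolding S_def by force
  moreover have "0 \<le> x j k" if "k \<in> S" for k
    using that is_alloc_nonneg[OF stableD(1)[OF sx] _ j] unfolding S_def by simp
  ultimately show ?thesis by (simp add: sum_nonneg)
qed

lemma stable_sublevel_sum_profile_le:
  fixes c :: real
  assumes "stable n m L x" "stable n m L y"
  defines "S \<equiv> {k. k < n \<and> profile m x k \<le> c}"
  shows "(\<Sum>k\<in>S. profile m y k) \<le> (\<Sum>k\<in>S. profile m x k)"
proof -
  have "(\<Sum>k\<in>S. profile m y k) = (\<Sum>j<m. \<Sum>k\<in>S. y j k)"
    unfolding profile_def by (rule sum.swap)
  also have "\<dots> \<le> (\<Sum>j<m. \<Sum>k\<in>S. x j k)"
    using stable_sublevel_item_share_le[OF assms(1,2)] unfolding S_def by (rule sum_mono) simp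
  also have "\<dots> = (\<Sum>k\<in>S. profile m x k)"
    unfolding profile_def by (rule sum.swap[symmetric])
  finally show ?thesis .
qed

lemma stable_profile_increase_not_minimal:
  assumes "stable n m L x" "stable n m L y" "i < n"
    and increase: "profile m x i < profile m y i"
    and minimal: "\<And>k. k < n \<Longrightarrow> profile m x k \<noteq> profile m y k \<Longrightarrow> profile m x i \<le> profile m y k"
  shows False
proof -
  define S where "S = {k. k < n \<and> profile m x k \<le> profile m x i}"
  have "(\<Sum>k\<in>S. profile m x k) < (\<Sum>k\<in>S. profile m y k)"
  proof (rule sum_strict_mono_ex1)
    show "\<forall>k\<in>S. profile m x k \<le> profile m y k"
      using minimal unfolding S_def by force
    show "\<exists>k\<in>S. profile m x k < profile m y k"
      using \<open>i < n\<close> increase unfolding S_def by auto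
  qed (simp add: S_def)
  with stable_sublevel_sum_profile_le[OF assms(1,2), of "profile m x i"] show False
    unfolding S_def by linarith
qed

lemma stable_profile_unique:
  assumes sx: "stable n m L x" and sy: "stable n m L y" and "i < n"
  shows "profile m x i = profile m y i"
proof (rule ccontr)
  assume "profile m x i \<noteq> profile m y i"
  define D where "D = {k. k < n \<and> profile m x k \<noteq> profile m y k}"
  let ?low = "\<lambda>k. min (profile m x k) (profile m y k)"
  have "finite D" "D \<noteq> {}" using \<open>i < n\<close> \<open>profile m x i \<noteq> profile m y i\<close> by (auto simp: D_def)
  then obtain i0 where "is_arg_min ?low (\<lambda>k. k \<in> D) i0"
    using ex_is_arg_min_if_finite by blast
  then have i0: "i0 < n" "profile m x i0 \<noteq> profile m y i0"
    and least: "\<And>k. k < n \<Longrightarrow> profile m x k \<noteq> profile m y k \<Longrightarrow> ?low i0 \<le> ?low k"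
    unfolding is_arg_min_linorder D_def by auto
  show False
  proof (cases "profile m x i0 < profile m y i0")
    case True
    have "profile m x i0 \<le> profile m y k" if "k < n" "profile m x k \<noteq> profile m y k" for k
      using least[OF that] True by (auto simp: min_def split: if_splits)
    from stable_profile_increase_not_minimal[OF sx sy i0(1) True this] show False .
  next
    case False
    with i0(2) have increase: "profile m y i0 < profile m x i0" by simp
    have "profile m y i0 \<le> profile m x k" if "k < n" "profile m y k \<noteq> profile m x k" for k
      using least[OF that[unfolded eq_commute[of "profile m y k"]]] increase
      by (auto simp: min_def split: if_splits)
    from stable_profile_increase_not_minimal[OF sy sx i0(1) increase this] show False .
  qed
qed

lemma layer_star_iff:
  assumes "stable n m L x"
  shows "i \<in> layer_star n m L d \<longleftrightarrow> i < n \<and> profile m x i = d"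
proof
  show "i < n \<and> profile m x i = d" if "i \<in> layer_star n m L d"
    using that assms unfolding layer_star_def by blast
  show "i \<in> layer_star n m L d" if "i < n \<and> profile m x i = d"
    using that stable_profile_unique[OF assms, of _ i] unfolding layer_star_def by simp
qed

lemma stable_layer_items_subset:
  assumes sx: "stable n m L x" and sy: "stable n m L y"
  shows "{j. j < m \<and> (\<exists>i\<in>layer_star n m L d. x j i > 0)} \<subseteq>
         {j. j < m \<and> (\<exists>i\<in>layer_star n m L d. y j i > 0)}"
proof (intro subsetI CollectI conjI)
  fix j assume "j \<in> {j. j < m \<and> (\<exists>i\<in>layer_star n m L d. x j i > 0)}"
  then obtain i where j: "j < m" and "i \<in> layer_star n m L d" and held: "0 < x j i" by auto
  then have i: "i < n" "profile m x i = d" "profile m y i = d"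
    using layer_star_iff[OF sx] layer_star_iff[OF sy] by auto
  have i_likes: "j \<in> L i" using is_clean_pos_liked[OF stableD(2)[OF sx] i(1) j held] .
  have "0 < (\<Sum>k<n. y j k)"
    using max_usw_liked_item_allocated[OF stableD(3)[OF sy] i(1) j i_likes] by simp
  then obtain k where k: "k < n" "0 < y j k" by (meson lessThan_iff not_le sum_nonpos)
  have "profile m y k \<le> d"
    using stable_holder_profile_le[OF sy k(1) i(1) j k(2) i_likes] i by simp
  moreover have "d \<le> profile m x k"
    using stable_holder_profile_le[OF sx i(1) k(1) j held] k
      is_clean_pos_liked[OF stableD(2)[OF sy] k(1) j] i by simp
  ultimately have "k \<in> layer_star n m L d"
    using stable_profile_unique[OF sx sy k(1)] layer_star_iff[OF sy] k(1) by simp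
  with k(2) show "\<exists>i\<in>layer_star n m L d. y j i > 0" by blast
qed (simp)

lemma stable_layer_item_complete:
  assumes sx: "stable n m L x" and j: "j < m" and "i \<in> layer_star n m L d" and held: "0 < x j i"
  shows "(\<Sum>k\<in>layer_star n m L d. x j k) = 1"
proof -
  have i: "i < n" "profile m x i = d" using layer_star_iff[OF sx] assms(3) by auto
  have "x j k = 0" if "k < n" "k \<notin> layer_star n m L d" for k
    using that is_alloc_nonneg[OF stableD(1)[OF sx] that(1) j]
      stable_holders_same_profile[OF sx i(1) that(1) j held] layer_star_iff[OF sx] i
    by force
  then have "(\<Sum>k\<in>layer_star n m L d. x j k) = (\<Sum>k<n. x j k)"
    by (intro sum.mono_neutral_left) (auto simp: layer_star_def)
  also have "\<dots> = 1"
    using max_usw_liked_item_allocated[OF stableD(3)[OF sx] i(1) j]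
      is_clean_pos_liked[OF stableD(2)[OF sx] i(1) j held] by simp
  finally show ?thesis .
qed

theorem lemma5:
  fixes n m :: nat and L :: "nat \<Rightarrow> nat set" and d :: real
  assumes "\<forall>i<n. L i \<subseteq> {..<m}"
  shows "(\<forall>x y. stable n m L x \<longrightarrow> stable n m L y \<longrightarrow>
            {j. j < m \<and> (\<exists>i\<in>layer_star n m L d. x j i > 0)} =
            {j. j < m \<and> (\<exists>i\<in>layer_star n m L d. y j i > 0)})
       \<and> (\<forall>x. stable n m L x \<longrightarrow>
            (\<forall>j<m. (\<exists>i\<in>layer_star n m L d. x j i > 0) \<longrightarrow>
                   (\<Sum>i\<in>layer_star n m L d. x j i) = 1))"
  by (intro conjI allI impI subset_antisym stable_layer_items_subset)
    (auto intro: stable_layer_item_complete)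

end
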